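(* For every $n\ge0$, $\bigcap_{k=0}^\infty\mathcal L^{(n)}_k=\bigcap_{k=0}^\infty\mathcal G^{(n)}_k$.
   Context: Fix a prime $p$ and an embedding $\bar{\mathbb Q}\subset\mathbb C$; put $\xi_{p^n}=\exp(2\pi i/p^n)$ and $G_K=\mathrm{Gal}(\bar{\mathbb Q}/K)$. For $n\ge0$ let $V_n=\mathbb P^1_{\bar{\mathbb Q}}\setminus(\{0,\infty\}\cup\mu_{p^n})$ and let $\pi_1(V_n,\vec{01})$ be its pro-$p$ étale fundamental group based at the tangential base point $\vec{01}$; $G_{\mathbb Q}$ acts on it and on torsors of étale paths. It is free pro-$p$ on $x_n$ (standard loop around $0$) and $y_{k,n}$, $0\le k<p^n$ (standard loop around $\xi_{p^n}^k$). For an étale path $\gamma$ from $a$ to $b$ put $\mathfrak f_\gamma(\sigma)=\gamma^{-1}\cdot\sigma(\gamma)\in\pi_1(V_n,a)$, where $\beta\cdot\alpha$ means $\alpha$ followed by $\beta$. Let $\pi_n$ be the path from $\vec{01}$ to $\frac1{p^n}\vec{10}$ given by the real interval $[0,1]$. Let $\mathbb Q_p\{\{\mathcal Y_n\}\}$ be the algebra of noncommutative formal power series in $X_n,Y_{0,n},\dots,Y_{p^n-1,n}$ (indices of $Y_{i,n}$ read modulo $p^n$), $\mathcal M_n$ the set of nonempty monomials in these variables, $\deg w$ the total degree and $\deg_{\mathcal Y}w$ the degree in the variables $Y_{i,n}$, and $E_n:\pi_1(V_n,\vec{01})\to\mathbb Q_p\{\{\mathcal Y_n\}\}$ the continuous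 multiplicative map with $E_n(x_n)=\exp X_n$, $E_n(y_{k,n})=\exp Y_{k,n}$. For $\sigma\in G_{\mathbb Q}$ define $\lambda^{(n)}_w(\sigma)$ by $E_n(\mathfrak f_{\pi_n}(\sigma))=1+\sum_{w\in\mathcal M_n}\lambda^{(n)}_w(\sigma)w$. Depth filtration: $\mathcal L^{(n)}_0=G_{\mathbb Q(\mu_{p^\infty})}$ and for $k\ge1$, $\mathcal L^{(n)}_k=\{\sigma\in G_{\mathbb Q(\mu_{p^\infty})}:\ \lambda^{(n)}_w(\sigma)=0\text{ for all }w\in\mathcal M_n\text{ with }\deg_{\mathcal Y}w\le k\}$. Weight filtration: $\mathcal G^{(n)}_0=G_{\mathbb Q(\mu_{p^\infty})}$ and for $k\ge1$, $\mathcal G^{(n)}_k=\{\sigma\in\mathcal G^{(n)}_{k-1}:\ \lambda^{(n)}_w(\sigma)=0\text{ for all }w\in\mathcal M_n\text{ with }\deg w=k\}$. *)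

theory Defs
  imports Main "HOL-Computational_Algebra.Primes"
begin

text \<open>Letters of the alphabet of Q_p{{Y_n}}: X_n and Y_{i,n} (0 <= i < p^n).\<close>
datatype letter = LX | LY nat

definition letters :: "nat \<Rightarrow> nat \<Rightarrow> letter set" where
  "letters p n = insert LX (LY ` {..<p ^ n})"

definition monomials :: "nat \<Rightarrow> nat \<Rightarrow> letter list set" where
  "monomials p n = {w. w \<noteq> [] \<and> set w \<subseteq> letters p n}"

definition deg :: "letter list \<Rightarrow> nat" where
  "deg w = length w"

definition degY :: "letter list \<Rightarrow> nat" where
  "degY w = length (filter (\<lambda>l. l \<noteq> LX) w)"

text \<open>Depth filtration L^{(n)}_k.  Gam plays the role of G_{Q(mu_{p^infty})},
  lam n sigma w the coefficient lambda^{(n)}_w(sigma).\<close>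
definition depth_filt ::
  "nat \<Rightarrow> 'g set \<Rightarrow> (nat \<Rightarrow> 'g \<Rightarrow> letter list \<Rightarrow> 'b::zero) \<Rightarrow> nat \<Rightarrow> nat \<Rightarrow> 'g set" where
  "depth_filt p Gam lam n k =
     (if k = 0 then Gam
      else {\<sigma> \<in> Gam. \<forall>w \<in> monomials p n. degY w \<le> k \<longrightarrow> lam n \<sigma> w = 0})"

fun weight_filt ::
  "nat \<Rightarrow> 'g set \<Rightarrow> (nat \<Rightarrow> 'g \<Rightarrow> letter list \<Rightarrow> 'b::zero) \<Rightarrow> nat \<Rightarrow> nat \<Rightarrow> 'g set" where
  "weight_filt p Gam lam n 0 = Gam"
| "weight_filt p Gam lam n (Suc k) =
     {\<sigma> \<in> weight_filt p Gam lam n k.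
        \<forall>w \<in> monomials p n. deg w = Suc k \<longrightarrow> lam n \<sigma> w = 0}"

end

theory Submission
  imports Defs
begin

text \<open>Beyond level 0, the \<open>k\<close>-th step of either filtration is cut out by the vanishing of
  \<open>\<lambda>\<^sub>w\<close> for all monomials \<open>w\<close> whose degree, in the respective grading, is at most \<open>k\<close>.
  Every monomial has finite degree in both gradings, so both intersections are the set of \<open>\<sigma>\<close>
  all of whose coefficients vanish.\<close>

lemma INT_vanishing_up_to_degree:
  fixes F :: "nat \<Rightarrow> 'g set" and d :: "'w \<Rightarrow> nat"
  assumes zero: "F 0 = Gam"
    and pos: "\<And>k. k \<ge> 1 \<Longrightarrow> F k = {\<sigma> \<in> Gam. \<forall>w \<in> M. d w \<le> k \<longrightarrow> P \<sigma> w}"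
  shows "(\<Inter>k. F k) = {\<sigma> \<in> Gam. \<forall>w \<in> M. P \<sigma> w}"
proof (intro set_eqI iffI)
  fix \<sigma> assume \<sigma>: "\<sigma> \<in> (\<Inter>k. F k)"
  have "P \<sigma> w" if "w \<in> M" for w
  proof -
    have "\<sigma> \<in> F (Suc (d w))"
      using \<sigma> by blast
    then show ?thesis
      using pos[of "Suc (d w)"] that by simp
  qed
  moreover have "\<sigma> \<in> Gam"
    using \<sigma> zero by blast
  ultimately show "\<sigma> \<in> {\<sigma> \<in> Gam. \<forall>w \<in> M. P \<sigma> w}"
    by blast
next
  fix \<sigma> assume \<sigma>: "\<sigma> \<in> {\<sigma> \<in> Gam. \<forall>w \<in> M. P \<sigma> w}"
  have "\<sigma> \<in> F k" for k
  proof (cases "k = 0")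
    case True
    then show ?thesis using \<sigma> zero by simp
  next
    case False
    then show ?thesis using \<sigma> pos[of k] by simp
  qed
  then show "\<sigma> \<in> (\<Inter>k. F k)"
    by blast
qed

lemma weight_filt_eq:
  "weight_filt p Gam lam n k = {\<sigma> \<in> Gam. \<forall>w \<in> monomials p n. deg w \<le> k \<longrightarrow> lam n \<sigma> w = 0}"
proof (induction k)
  case 0
  then show ?case by (auto simp: monomials_def deg_def)
next
  case (Suc k)
  then show ?case by (auto simp: le_Suc_eq)
qed

lemma INT_depth_filt:
  "(\<Inter>k. depth_filt p Gam lam n k) = {\<sigma> \<in> Gam. \<forall>w \<in> monomials p n. lam n \<sigma> w = 0}"
  by (rule INT_vanishing_up_to_degree[where d = degY]) (simp_all add: depth_filt_def)

lemma INT_weight_filt: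
  "(\<Inter>k. weight_filt p Gam lam n k) = {\<sigma> \<in> Gam. \<forall>w \<in> monomials p n. lam n \<sigma> w = 0}"
  by (rule INT_vanishing_up_to_degree[where d = deg]) (simp, simp add: weight_filt_eq)

theorem lemma3p3:
  fixes p :: nat and Gam :: "'g set" and lam :: "nat \<Rightarrow> 'g \<Rightarrow> letter list \<Rightarrow> 'b::zero"
  assumes "prime p"
  shows "\<forall>n. (\<Inter>k. depth_filt p Gam lam n k) = (\<Inter>k. weight_filt p Gam lam n k)"
  by (simp add: INT_depth_filt INT_weight_filt)

end
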